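(* Let $g_1, g_2\in G(\Gamma)$ be strongly non-split. Then there exists a linear order on $V(\Gamma)$ together with vertices $v_1\in\operatorname{supp}(g_1)$ and $v_2\in\operatorname{supp}(g_2)$ such that both the $v_1$-conical conjugate of $g_1$ and the $v_2$-conical conjugate of $g_2$ are strongly non-split and SD-conical.
   Context: $\Gamma$ is a finite simple graph and $G(\Gamma)=\langle v\in V(\Gamma)\mid [v_i,v_j]=1 \text{ if } \{v_i,v_j\}\notin E(\Gamma)\rangle$, i.e. the right-angled Artin group on the complement graph $\Gamma^c$ (generators joined by an edge of $\Gamma$ do not commute). $|g|$ is word length and $\operatorname{supp}(g)$ is the set of generators appearing in a reduced word for $g$. A decomposition $g=g_1\cdots g_k$ is geodesic if $|g|=|g_1|+\cdots+|g_k|$. $g$ is cyclically reduced if it has minimal word length in its conjugacy class. $g$ is non-split if $\operatorname{supp}(g)$ spans a connected subgraph of $\Gamma$; it is strongly non-split if it is non-split and no generator $v$ disjointly commutes with $g$ (i.e. there is no $v\notin\operatorname{supp}(g)$ commuting with every generator in $\operatorname{supp}(g)$). $S(g)$ is the set of generators $v$ such that $g=v^{\pm1}h$ is geodesic for some $h$; $g$ is $v_0$-conical if $S(g)=\{v_0\}$, and then $v_0=\operatorname{apex}(g)$. Given a linear order on $V(\Gamma)$, a conical element $g$ is SD-conical if $\operatorname{apex}(g)$ does not commute with any generator smaller than it (i.e. $v<\operatorname{apex}(g)$ implies $\{v,\operatorname{apex}(g)\}\in E(\Gamma)$). For a non-split, cyclically reduced $g$ and $v_0\in\operatorname{supp}(g)$,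 the $v_0$-conical conjugate of $g$ is defined as follows: for a non-split $h$ and $v\in\operatorname{supp}(h)$ there is a unique geodesic decomposition $h=tp$ with $p$ $v$-conical and $v\notin\operatorname{supp}(t)$; starting from $g_0=g$, write $g_i=t_ip_i$ in this way (with $v=v_0$) and set $g_{i+1}=p_it_i$; for the smallest $k$ with $g_k$ $v_0$-conical (such $k\le|V(\Gamma)|-1$ exists), the $v_0$-conical conjugate is $g_k$. It is a conjugate of $g$ obtained by iterated cyclic conjugations, has the same support as $g$, and is again non-split and cyclically reduced. (In the lemma the $g_i$ are implicitly taken cyclically reduced so that conical conjugates are defined.) *)

theory Defs
  imports Main
begin

(* Right-angled Artin group G(Gamma) on the complement graph of Gamma.
   Gamma: vertex set = the finite type 'v, edge relation E (symmetric, irreflexive).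
   Letters are (v, True) = v and (v, False) = v^-1.
   Group elements are represented as equivalence classes of words. *)

type_synonym 'v letter = "'v \<times> bool"
type_synonym 'v elt = "'v letter list set"

inductive rstep :: "('v \<Rightarrow> 'v \<Rightarrow> bool) \<Rightarrow> 'v letter list \<Rightarrow> 'v letter list \<Rightarrow> bool"
  for E where
  cancel: "rstep E (xs @ [(v, b), (v, \<not> b)] @ ys) (xs @ ys)"
| comm: "\<not> E (fst a) (fst c) \<Longrightarrow> rstep E (xs @ [a, c] @ ys) (xs @ [c, a] @ ys)"

definition weq :: "('v \<Rightarrow> 'v \<Rightarrow> bool) \<Rightarrow> 'v letter list \<Rightarrow> 'v letter list \<Rightarrow> bool" where
  "weq E = equivclp (rstep E)"

definition cls :: "('v \<Rightarrow> 'v \<Rightarrow> bool) \<Rightarrow> 'v letter list \<Rightarrow> 'v elt" where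
  "cls E w = {u. weq E w u}"

definition raag :: "('v \<Rightarrow> 'v \<Rightarrow> bool) \<Rightarrow> 'v elt set" where
  "raag E = range (cls E)"

definition gmul :: "('v \<Rightarrow> 'v \<Rightarrow> bool) \<Rightarrow> 'v elt \<Rightarrow> 'v elt \<Rightarrow> 'v elt" where
  "gmul E g h = {u. \<exists>x\<in>g. \<exists>y\<in>h. weq E (x @ y) u}"

definition inv_word :: "'v letter list \<Rightarrow> 'v letter list" where
  "inv_word w = rev (map (\<lambda>(v, b). (v, \<not> b)) w)"

definition ginv :: "('v \<Rightarrow> 'v \<Rightarrow> bool) \<Rightarrow> 'v elt \<Rightarrow> 'v elt" where
  "ginv E g = {u. \<exists>x\<in>g. weq E (inv_word x) u}"

definition gen :: "('v \<Rightarrow> 'v \<Rightarrow> bool) \<Rightarrow> 'v \<Rightarrow> bool \<Rightarrow> 'v elt" where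
  "gen E v b = cls E [(v, b)]"

definition glen :: "'v elt \<Rightarrow> nat" where
  "glen g = (LEAST n. \<exists>w\<in>g. length w = n)"

definition supp :: "'v elt \<Rightarrow> 'v set" where
  "supp g = {v. \<exists>w\<in>g. length w = glen g \<and> v \<in> fst ` set w}"

definition cyc_reduced :: "('v \<Rightarrow> 'v \<Rightarrow> bool) \<Rightarrow> 'v elt \<Rightarrow> bool" where
  "cyc_reduced E g \<longleftrightarrow> (\<forall>h\<in>raag E. glen g \<le> glen (gmul E (gmul E h g) (ginv E h)))"

definition connected_in :: "('v \<Rightarrow> 'v \<Rightarrow> bool) \<Rightarrow> 'v set \<Rightarrow> bool" where
  "connected_in E S \<longleftrightarrow> S \<noteq> {} \<and>
     (\<forall>u\<in>S. \<forall>v\<in>S. (\<lambda>x y. x \<in> S \<and> y \<in> S \<and> E x y)\<^sup>*\<^sup>* u v)"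

definition non_split :: "('v \<Rightarrow> 'v \<Rightarrow> bool) \<Rightarrow> 'v elt \<Rightarrow> bool" where
  "non_split E g \<longleftrightarrow> connected_in E (supp g)"

definition disj_commutes :: "('v \<Rightarrow> 'v \<Rightarrow> bool) \<Rightarrow> 'v \<Rightarrow> 'v elt \<Rightarrow> bool" where
  "disj_commutes E v g \<longleftrightarrow> v \<notin> supp g \<and> (\<forall>u\<in>supp g. \<not> E v u)"

definition strongly_non_split :: "('v \<Rightarrow> 'v \<Rightarrow> bool) \<Rightarrow> 'v elt \<Rightarrow> bool" where
  "strongly_non_split E g \<longleftrightarrow> non_split E g \<and> (\<nexists>v. disj_commutes E v g)"

definition Sset :: "('v \<Rightarrow> 'v \<Rightarrow> bool) \<Rightarrow> 'v elt \<Rightarrow> 'v set" where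
  "Sset E g = {v. \<exists>b. \<exists>h\<in>raag E. g = gmul E (gen E v b) h \<and> glen g = 1 + glen h}"

definition conical :: "('v \<Rightarrow> 'v \<Rightarrow> bool) \<Rightarrow> 'v \<Rightarrow> 'v elt \<Rightarrow> bool" where
  "conical E v g \<longleftrightarrow> Sset E g = {v}"

text \<open>SD-conical w.r.t. a linear order R (R is the non-strict order relation).\<close>
definition SD_conical :: "('v \<Rightarrow> 'v \<Rightarrow> bool) \<Rightarrow> 'v rel \<Rightarrow> 'v elt \<Rightarrow> bool" where
  "SD_conical E R g \<longleftrightarrow> (\<exists>v0. conical E v0 g \<and>
      (\<forall>v. (v, v0) \<in> R \<and> v \<noteq> v0 \<longrightarrow> E v v0))"

text \<open>The unique geodesic decomposition h = t p, p v-conical, v not in supp t.\<close>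
definition conical_dec :: "('v \<Rightarrow> 'v \<Rightarrow> bool) \<Rightarrow> 'v \<Rightarrow> 'v elt \<Rightarrow> 'v elt \<times> 'v elt" where
  "conical_dec E v h = (THE (t, p). t \<in> raag E \<and> p \<in> raag E \<and> h = gmul E t p \<and>
      glen h = glen t + glen p \<and> conical E v p \<and> v \<notin> supp t)"

definition conical_step :: "('v \<Rightarrow> 'v \<Rightarrow> bool) \<Rightarrow> 'v \<Rightarrow> 'v elt \<Rightarrow> 'v elt" where
  "conical_step E v g = (case conical_dec E v g of (t, p) \<Rightarrow> gmul E p t)"

definition conical_conj :: "('v \<Rightarrow> 'v \<Rightarrow> bool) \<Rightarrow> 'v \<Rightarrow> 'v elt \<Rightarrow> 'v elt" where
  "conical_conj E v g =
     (conical_step E v ^^ (LEAST k. conical E v ((conical_step E v ^^ k) g))) g"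

end

theory Submission
  imports Defs "HOL-Library.Countable"
begin

(* Words are considered up to commutation of adjacent letters on non-adjacent vertices, i.e. in
   the trace monoid. Letting letters act on reduced words by cancelling or prepending shows that
   two reduced words represent the same element iff they differ by commutations only, so length,
   support and S(g) can be read off any reduced word.

   Every reduced word w with v in its letters splits as w ~ a c with v not in a and c a cone at v:
   c starts with v^(+-1) and each later letter is adjacent to, or on the same vertex as, an earlier
   one. This gives the decomposition g = t p, and the conical step is the rotation c a, which is
   again reduced and cyclically reduced with the same support. Pushing the letters of a through c
   either enlarges the cone or leaves a commuting with and disjoint from c; the latter would
   disconnect the support. So the prefix shrinks and the iteration ends in a v-conical conjugate
   with the same support, hence again strongly non-split.

   For the order, pick v1 in supp g1 and v2 in supp g2 equal or adjacent (v1 cannot disjointly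
   commute with g2) and put v1 first and v2 second. *)

lemma append_eq_append_Cons_cases:
  assumes "xs @ ys = us @ x # vs"
  obtains (left) zs where "xs = us @ x # zs" "vs = zs @ ys"
  | (right) zs where "us = xs @ zs" "ys = zs @ x # vs"
  using assms by (auto simp: append_eq_append_conv2 Cons_eq_append_conv append_eq_Cons_conv)

lemma append_Cons_eq_append_Cons_Cons_cases:
  assumes "c1 @ x # c2 = a @ y # z # b"
  obtains (before) a2 where "a = c1 @ x # a2" "c2 = a2 @ y # z # b"
  | (first) "c1 = a" "x = y" "c2 = z # b"
  | (second) "c1 = a @ [y]" "x = z" "c2 = b"
  | (after) m where "c1 = a @ y # z # m" "b = m @ x # c2"
  using assms by (auto simp: append_eq_append_conv2 Cons_eq_append_conv append_eq_Cons_conv)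

definition letter_inv :: "'v letter \<Rightarrow> 'v letter" where
  "letter_inv x = (fst x, \<not> snd x)"

lemma letter_inv_inv [simp]: "letter_inv (letter_inv x) = x"
  and fst_letter_inv [simp]: "fst (letter_inv x) = fst x"
  and letter_inv_neq [simp]: "letter_inv x \<noteq> x" "x \<noteq> letter_inv x"
  unfolding letter_inv_def by (cases x; simp)+

lemma letter_inv_eqI: "fst y = fst x \<Longrightarrow> y \<noteq> x \<Longrightarrow> y = letter_inv x"
  unfolding letter_inv_def by (cases x; cases y) auto

lemma inv_word_Cons: "inv_word (x # w) = inv_word w @ [letter_inv x]"
  unfolding inv_word_def letter_inv_def by (cases x) auto

lemma inv_word_append: "inv_word (a @ b) = inv_word b @ inv_word a"
  unfolding inv_word_def by simp

lemma inv_word_inv_word [simp]: "inv_word (inv_word a) = a"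
  unfolding inv_word_def by (induction a) auto

lemma weq_refl [simp]: "weq E u u"
  unfolding weq_def by simp

lemma weq_sym: "weq E u w \<Longrightarrow> weq E w u"
  unfolding weq_def by (rule equivclp_sym)

lemma weq_trans: "weq E u w \<Longrightarrow> weq E w z \<Longrightarrow> weq E u z"
  unfolding weq_def by (rule equivclp_trans)

lemma rstep_ctx: "rstep E u w \<Longrightarrow> rstep E (p @ u @ q) (p @ w @ q)"
proof (induction rule: rstep.induct)
  case (cancel xs v b ys)
  show ?case using rstep.cancel[of E "p @ xs" v b "ys @ q"] by simp
next
  case (comm a c xs ys)
  show ?case using rstep.comm[of E a c "p @ xs" "ys @ q", OF comm] by simp
qed

lemma weq_ctx: "weq E u w \<Longrightarrow> weq E (p @ u @ q) (p @ w @ q)"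
  unfolding weq_def
proof (induction rule: equivclp_induct)
  case (step y z)
  then show ?case using rstep_ctx by (meson equivclp_into_equivclp)
qed simp

lemma weq_append: "weq E a a' \<Longrightarrow> weq E b b' \<Longrightarrow> weq E (a @ b) (a' @ b')"
  using weq_ctx[of E a a' "[]" b] weq_ctx[of E b b' a' "[]"] weq_trans by fastforce

lemma weq_inv_word_cancel: "weq E (inv_word a @ a) []"
proof (induction a)
  case (Cons x a)
  have "rstep E (inv_word a @ [letter_inv x, x] @ a) (inv_word a @ a)"
    using rstep.cancel[of E "inv_word a" "fst x" "\<not> snd x" a] unfolding letter_inv_def by (cases x) auto
  then have "weq E (inv_word (x # a) @ x # a) (inv_word a @ a)"
    unfolding weq_def by (simp add: inv_word_Cons r_into_equivclp)
  then show ?case using Cons.IH weq_trans by blast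
qed (simp add: inv_word_def)

lemma in_cls: "u \<in> cls E w \<longleftrightarrow> weq E w u"
  unfolding cls_def by simp

lemma cls_eq: "weq E u w \<Longrightarrow> cls E u = cls E w"
  unfolding cls_def by (auto intro: weq_trans weq_sym)

lemma cls_eqI: "u \<in> cls E w \<Longrightarrow> cls E u = cls E w"
  by (simp add: in_cls cls_eq weq_sym)

lemma cls_in_raag [simp]: "cls E w \<in> raag E"
  unfolding raag_def by simp

lemma gmul_cls: "gmul E (cls E a) (cls E b) = cls E (a @ b)"
  unfolding gmul_def cls_def by (blast intro: weq_trans weq_append weq_refl)

lemma glen_le: "u \<in> g \<Longrightarrow> glen g \<le> length u"
  unfolding glen_def by (rule Least_le) blast

lemma glen_attained: "u \<in> g \<Longrightarrow> \<exists>w\<in>g. length w = glen g"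
  unfolding glen_def by (rule LeastI) blast

lemma connected_in_not_separated:
  assumes "connected_in E (A \<union> C)" "a0 \<in> A" "c0 \<in> C"
  shows "\<not> (\<forall>x\<in>A. \<forall>y\<in>C. \<not> E x y \<and> x \<noteq> y)"
proof
  assume sep: "\<forall>x\<in>A. \<forall>y\<in>C. \<not> E x y \<and> x \<noteq> y"
  have "(\<lambda>x y. x \<in> A \<union> C \<and> y \<in> A \<union> C \<and> E x y)\<^sup>*\<^sup>* a0 c0"
    using assms unfolding connected_in_def by blast
  then have "c0 \<in> A"
  proof (induction rule: rtranclp_induct)
    case (step y z)
    with sep show ?case by blast
  qed (fact assms(2))
  with sep assms(3) show False by blast
qed

lemma strongly_non_split_supp_cong:
  "supp h = supp g \<Longrightarrow> strongly_non_split E h \<longleftrightarrow> strongly_non_split E g"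
  by (simp add: strongly_non_split_def non_split_def disj_commutes_def)

section \<open>Words modulo commutation\<close>

locale raag_graph =
  fixes E :: "'v \<Rightarrow> 'v \<Rightarrow> bool"
  assumes sym_E: "symp E"
begin

lemma E_sym: "E x y \<Longrightarrow> E y x"
  using sym_E by (meson sympD)

lemma not_E_sym: "\<not> E x y \<Longrightarrow> \<not> E y x"
  using E_sym by blast

definition commute_step :: "'v letter list \<Rightarrow> 'v letter list \<Rightarrow> bool" where
  "commute_step u w \<longleftrightarrow>
     (\<exists>xs a c ys. \<not> E (fst a) (fst c) \<and> u = xs @ [a, c] @ ys \<and> w = xs @ [c, a] @ ys)"

abbreviation ceq :: "'v letter list \<Rightarrow> 'v letter list \<Rightarrow> bool" where
  "ceq \<equiv> commute_step\<^sup>*\<^sup>*"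

lemma ceq_sym: "ceq u w \<Longrightarrow> ceq w u"
proof (rule sympD[OF symp_rtranclp])
  show "symp commute_step"
    unfolding commute_step_def by (intro sympI) (use E_sym in blast)
qed

lemmas ceq_trans = rtranclp_trans[of commute_step]

lemma commute_stepI: "\<not> E (fst a) (fst c) \<Longrightarrow> commute_step (xs @ a # c # ys) (xs @ c # a # ys)"
  unfolding commute_step_def by (rule exI[of _ xs], rule exI[of _ a], rule exI[of _ c]) simp

lemma ceq_ctx: "ceq u w \<Longrightarrow> ceq (p @ u @ q) (p @ w @ q)"
proof (induction rule: rtranclp_induct)
  case (step y z)
  from step.hyps(2) obtain xs a c ys where "\<not> E (fst a) (fst c)"
    and "y = xs @ [a, c] @ ys" "z = xs @ [c, a] @ ys" unfolding commute_step_def by blast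
  then have "commute_step (p @ y @ q) (p @ z @ q)" using commute_stepI[of a c "p @ xs" "ys @ q"] by simp
  with step.IH show ?case by simp
qed simp

lemma ceq_Cons: "ceq u w \<Longrightarrow> ceq (x # u) (x # w)"
  using ceq_ctx[of u w "[x]" "[]"] by simp

lemma ceq_swap: "\<not> E (fst p) (fst q) \<Longrightarrow> ceq (p # q # t) (q # p # t)"
  using commute_stepI[of p q "[]" t] by (simp add: r_into_rtranclp)

lemma ceq_set_length: "ceq u w \<Longrightarrow> set u = set w \<and> length u = length w"
proof (induction rule: rtranclp_induct)
  case (step y z)
  from step.hyps(2) obtain xs a c ys where "y = xs @ [a, c] @ ys" "z = xs @ [c, a] @ ys"
    unfolding commute_step_def by blast
  with step.IH show ?case by auto
qed simp

lemma ceq_set: "ceq u w \<Longrightarrow> set u = set w"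
  and ceq_length: "ceq u w \<Longrightarrow> length u = length w"
  by (simp_all add: ceq_set_length)

lemma ceq_move_front: "\<forall>z\<in>set c1. \<not> E (fst z) (fst x) \<Longrightarrow> ceq (c1 @ x # c2) (x # c1 @ c2)"
proof (induction c1)
  case (Cons z c1)
  then have "ceq (z # c1 @ x # c2) (z # x # c1 @ c2)" by (simp add: ceq_Cons)
  also have "ceq \<dots> (x # z # c1 @ c2)" using Cons.prems by (simp add: ceq_swap)
  finally show ?case by simp
qed simp

lemma ceq_Cons_past:
  "\<forall>q\<in>set x. \<not> E (fst q) (fst h) \<Longrightarrow> ceq a (x @ y) \<Longrightarrow> ceq (h # a) (x @ h # y)"
  using ceq_trans[OF ceq_Cons ceq_sym[OF ceq_move_front]] by blast

lemma commute_step_Cons_decomp: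
  assumes cd: "commute_step (c1 @ x # c2) d" and c1: "\<forall>z\<in>set c1. \<not> E (fst z) (fst x) \<and> z \<noteq> x"
  shows "\<exists>c1' c2'. d = c1' @ x # c2' \<and> (\<forall>z\<in>set c1'. \<not> E (fst z) (fst x) \<and> z \<noteq> x) \<and>
    ceq (c1 @ c2) (c1' @ c2')"
proof -
  from cd obtain xs a b ys where ab: "\<not> E (fst a) (fst b)"
    and c: "c1 @ x # c2 = xs @ [a, b] @ ys" and d: "d = xs @ [b, a] @ ys" unfolding commute_step_def by blast
  from c have "c1 @ x # c2 = xs @ a # b # ys" by simp
  then show ?thesis
  proof (cases rule: append_Cons_eq_append_Cons_Cons_cases)
    case (before a2)
    have "commute_step (c1 @ c2) (c1 @ a2 @ b # a # ys)"
      using commute_stepI[OF ab, of "c1 @ a2" ys] before by simp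
    then show ?thesis using before d c1 by (intro exI[of _ c1] exI[of _ "a2 @ b # a # ys"]) simp
  next
    case first
    show ?thesis
    proof (cases "b = x")
      case True
      with first d c1 show ?thesis by (intro exI[of _ c1] exI[of _ c2]) simp
    next
      case False
      have "\<forall>z\<in>set (c1 @ [b]). \<not> E (fst z) (fst x) \<and> z \<noteq> x"
        using c1 first ab False E_sym[of "fst b" "fst x"] by auto
      with first d show ?thesis by (intro exI[of _ "c1 @ [b]"] exI[of _ ys]) simp
    qed
  next
    case second
    with d c1 show ?thesis by (intro exI[of _ xs] exI[of _ "a # ys"]) simp
  next
    case (after m)
    have "commute_step (c1 @ c2) ((xs @ b # a # m) @ c2)"
      using commute_stepI[OF ab, of xs "m @ c2"] after by simp
    moreover have "\<forall>z\<in>set (xs @ b # a # m). \<not> E (fst z) (fst x) \<and> z \<noteq> x" using after c1 by auto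
    ultimately show ?thesis using after d by (intro exI[of _ "xs @ b # a # m"] exI[of _ c2]) simp
  qed
qed

lemma ceq_Cons_decomp:
  assumes "ceq (x # w) c"
  shows "\<exists>c1 c2. c = c1 @ x # c2 \<and> (\<forall>z\<in>set c1. \<not> E (fst z) (fst x) \<and> z \<noteq> x) \<and> ceq w (c1 @ c2)"
  using assms
proof (induction rule: rtranclp_induct)
  case base
  show ?case by (rule exI[of _ "[]"]) simp
next
  case (step c d)
  then obtain c1 c2 where c: "c = c1 @ x # c2" and c1: "\<forall>z\<in>set c1. \<not> E (fst z) (fst x) \<and> z \<noteq> x"
    and w: "ceq w (c1 @ c2)" by blast
  from commute_step_Cons_decomp[OF step.hyps(2)[unfolded c] c1] obtain c1' c2' where
    "d = c1' @ x # c2'" "\<forall>z\<in>set c1'. \<not> E (fst z) (fst x) \<and> z \<noteq> x" "ceq (c1 @ c2) (c1' @ c2')"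
    by blast
  with w show ?case using ceq_trans by blast
qed

lemma ceq_Cons_cancel: "ceq (x # a) (x # b) \<Longrightarrow> ceq a b"
proof -
  assume "ceq (x # a) (x # b)"
  from ceq_Cons_decomp[OF this] obtain c1 c2 where
    h: "x # b = c1 @ x # c2" "\<forall>z\<in>set c1. z \<noteq> x" "ceq a (c1 @ c2)" by blast
  then have "c1 = []" by (cases c1) auto
  with h show ?thesis by simp
qed

lemma ceq_Cons_Cons_distinct:
  assumes "ceq (a # w1) (b # w2)" "a \<noteq> b"
  shows "\<exists>w3. ceq w1 (b # w3) \<and> ceq w2 (a # w3)"
proof -
  from ceq_Cons_decomp[OF assms(1)] obtain c1 c2 where h: "b # w2 = c1 @ a # c2"
    "\<forall>z\<in>set c1. \<not> E (fst z) (fst a) \<and> z \<noteq> a" "ceq w1 (c1 @ c2)" by blast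
  then obtain c1' where c1: "c1 = b # c1'" using assms(2) by (cases c1) auto
  with h have "ceq w2 (a # c1' @ c2)" by (simp add: ceq_move_front)
  with h c1 show ?thesis by auto
qed

lemma ceq_append_levi:
  "ceq (a @ c) (a' @ c') \<Longrightarrow>
     \<exists>x y z s. ceq a (x @ y) \<and> ceq c (z @ s) \<and> ceq a' (x @ z) \<and> ceq c' (y @ s)"
proof (induction a arbitrary: a' c')
  case Nil
  then show ?case by (intro exI[of _ "[]"] exI[of _ "[]"] exI[of _ a'] exI[of _ c']) auto
next
  case (Cons h a0)
  from ceq_Cons_decomp[of h "a0 @ c" "a' @ c'"] Cons.prems obtain d1 d2 where
    d: "a' @ c' = d1 @ h # d2" and d1: "\<forall>z\<in>set d1. \<not> E (fst z) (fst h) \<and> z \<noteq> h"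
    and d12: "ceq (a0 @ c) (d1 @ d2)" by auto
  from d show ?case
  proof (cases rule: append_eq_append_Cons_cases)
    case (left us)
    with d12 have "ceq (a0 @ c) ((d1 @ us) @ c')" by simp
    from Cons.IH[OF this] obtain x y z s where
      xyzs: "ceq a0 (x @ y)" "ceq c (z @ s)" "ceq (d1 @ us) (x @ z)" "ceq c' (y @ s)" by blast
    have "ceq a' (h # d1 @ us)" using left d1 by (simp add: ceq_move_front)
    also have "ceq \<dots> ((h # x) @ z)" using xyzs(3) by (simp add: ceq_Cons)
    finally have "ceq a' ((h # x) @ z)" .
    moreover have "ceq (h # a0) ((h # x) @ y)" using xyzs(1) by (simp add: ceq_Cons)
    ultimately show ?thesis using xyzs by blast
  next
    case (right us)
    with d12 have "ceq (a0 @ c) (a' @ us @ d2)" by simp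
    from Cons.IH[OF this] obtain x y z s where
      xyzs: "ceq a0 (x @ y)" "ceq c (z @ s)" "ceq a' (x @ z)" "ceq (us @ d2) (y @ s)" by blast
    have "\<forall>q\<in>set x. \<not> E (fst q) (fst h)" using ceq_set[OF xyzs(3)] d1 right by auto
    then have "ceq (h # a0) (x @ h # y)" using xyzs(1) by (rule ceq_Cons_past)
    moreover have "ceq c' (h # us @ d2)" using right d1 by (simp add: ceq_move_front)
    then have "ceq c' ((h # y) @ s)" using ceq_Cons[OF xyzs(4), of h] by (simp add: ceq_trans)
    ultimately show ?thesis using xyzs by blast
  qed
qed

section \<open>Reduced words and the normal form theorem\<close>

definition reduced :: "'v letter list \<Rightarrow> bool" where
  "reduced w \<longleftrightarrow> \<not> (\<exists>a y b. ceq w (a @ [y, letter_inv y] @ b))"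

definition can_lead :: "'v letter \<Rightarrow> 'v letter list \<Rightarrow> bool" where
  "can_lead x w \<longleftrightarrow> (\<exists>w'. ceq w (x # w'))"

lemma reduced_ceq: "ceq w w' \<Longrightarrow> reduced w \<Longrightarrow> reduced w'"
  unfolding reduced_def by (meson ceq_trans)

lemma reduced_appendD:
  assumes "reduced (a @ b)"
  shows "reduced a" "reduced b"
proof -
  have "ceq (a @ b) (p @ [y, letter_inv y] @ q @ b)" if "ceq a (p @ [y, letter_inv y] @ q)" for p y q
    using ceq_ctx[OF that, of "[]" b] by simp
  with assms show "reduced a" unfolding reduced_def by blast
  have "ceq (a @ b) ((a @ p) @ [y, letter_inv y] @ q)" if "ceq b (p @ [y, letter_inv y] @ q)" for p y q
    using ceq_ctx[OF that, of a "[]"] by simp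
  with assms show "reduced b" unfolding reduced_def by blast
qed

lemma reduced_Nil: "reduced []"
  unfolding reduced_def using ceq_length by fastforce

lemma can_lead_ceq: "ceq w1 w2 \<Longrightarrow> can_lead x w1 \<Longrightarrow> can_lead x w2"
  unfolding can_lead_def by (meson ceq_sym ceq_trans)

lemma reduced_ConsD: "reduced (x # w) \<Longrightarrow> reduced w \<and> \<not> can_lead (letter_inv x) w"
proof
  assume r: "reduced (x # w)"
  show "\<not> can_lead (letter_inv x) w"
  proof
    assume "can_lead (letter_inv x) w"
    then obtain q where "ceq w (letter_inv x # q)" unfolding can_lead_def by blast
    then have "ceq (x # w) ([] @ [x, letter_inv x] @ q)" by (simp add: ceq_Cons)
    with r show False unfolding reduced_def by blast
  qed
  show "reduced w" using reduced_appendD(2)[of "[x]" w] r by simp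
qed

lemma reduced_ConsI:
  assumes r: "reduced w" and nl: "\<not> can_lead (letter_inv x) w"
  shows "reduced (x # w)"
proof (rule ccontr)
  assume "\<not> reduced (x # w)"
  then obtain a y b where "ceq (x # w) (a @ [y, letter_inv y] @ b)" unfolding reduced_def by blast
  from ceq_Cons_decomp[OF this] obtain c1 c2 where c: "a @ y # letter_inv y # b = c1 @ x # c2"
    and c1: "\<forall>z\<in>set c1. \<not> E (fst z) (fst x) \<and> z \<noteq> x" and w: "ceq w (c1 @ c2)" by auto
  from c[symmetric] show False
  proof (cases rule: append_Cons_eq_append_Cons_Cons_cases)
    case (before a2)
    with w have "ceq w ((c1 @ a2) @ [y, letter_inv y] @ b)" by simp
    with r show False unfolding reduced_def by blast
  next
    case first
    with c1 have "ceq (c1 @ c2) (letter_inv x # c1 @ b)" by (simp add: ceq_move_front)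
    with w nl show False unfolding can_lead_def by (meson ceq_trans)
  next
    case second
    with c1 have "ceq (c1 @ c2) (letter_inv x # a @ b)" by (simp add: ceq_move_front)
    with w nl show False unfolding can_lead_def by (meson ceq_trans)
  next
    case (after m)
    with w have "ceq w (a @ [y, letter_inv y] @ m @ c2)" by simp
    with r show False unfolding reduced_def by blast
  qed
qed

lemma reduced_Cons_iff: "reduced (x # w) \<longleftrightarrow> reduced w \<and> \<not> can_lead (letter_inv x) w"
  using reduced_ConsD reduced_ConsI by blast

lemma can_lead_Cons_distinct: "x \<noteq> y \<Longrightarrow> can_lead x (y # w) \<Longrightarrow> can_lead x w"
  unfolding can_lead_def using ceq_Cons_Cons_distinct by blast

lemma can_lead_Cons_commuting: "\<not> E (fst x) (fst y) \<Longrightarrow> can_lead x w \<Longrightarrow> can_lead x (y # w)"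
  unfolding can_lead_def using ceq_trans[OF ceq_Cons ceq_swap] E_sym by blast

text \<open>Van der Waerden's trick: the letters act on reduced words modulo commutation compatibly with
  the defining relations, which yields reduced_weq_imp_ceq.\<close>

definition left_act :: "'v letter \<Rightarrow> 'v letter list \<Rightarrow> 'v letter list" where
  "left_act x w =
     (if can_lead (letter_inv x) w then (SOME w'. ceq w (letter_inv x # w')) else x # w)"

lemma left_act_cancel: "ceq w (letter_inv x # w') \<Longrightarrow> ceq (left_act x w) w'"
proof -
  assume w: "ceq w (letter_inv x # w')"
  let ?w'' = "SOME w'. ceq w (letter_inv x # w')"
  have "ceq w (letter_inv x # ?w'')" using w by (rule someI)
  with w have "ceq (letter_inv x # ?w'') (letter_inv x # w')" by (meson ceq_sym ceq_trans)
  moreover have "can_lead (letter_inv x) w" using w unfolding can_lead_def by blast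
  ultimately show ?thesis unfolding left_act_def by (simp add: ceq_Cons_cancel)
qed

lemma left_act_prepend: "\<not> can_lead (letter_inv x) w \<Longrightarrow> left_act x w = x # w"
  unfolding left_act_def by simp

lemma left_act_ceq: "ceq w1 w2 \<Longrightarrow> ceq (left_act x w1) (left_act x w2)"
proof (cases "can_lead (letter_inv x) w1")
  case True
  assume w12: "ceq w1 w2"
  from True obtain w' where w1: "ceq w1 (letter_inv x # w')" unfolding can_lead_def by blast
  with w12 have "ceq w2 (letter_inv x # w')" by (meson ceq_sym ceq_trans)
  with w1 show ?thesis by (meson left_act_cancel ceq_sym ceq_trans)
next
  case False
  assume w12: "ceq w1 w2"
  with False have "\<not> can_lead (letter_inv x) w2" using can_lead_ceq ceq_sym by blast
  with False w12 show ?thesis by (simp add: left_act_prepend ceq_Cons)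
qed

lemma left_act_reduced: "reduced w \<Longrightarrow> reduced (left_act x w)"
proof (cases "can_lead (letter_inv x) w")
  case True
  assume r: "reduced w"
  from True obtain w' where w: "ceq w (letter_inv x # w')" unfolding can_lead_def by blast
  have "reduced w'" using reduced_ceq[OF w r] by (simp add: reduced_Cons_iff)
  then show ?thesis using reduced_ceq[OF ceq_sym[OF left_act_cancel[OF w]]] by blast
next
  case False
  then show "reduced w \<Longrightarrow> ?thesis" by (simp add: left_act_prepend reduced_Cons_iff)
qed

lemma left_act_letter_inv: "reduced w \<Longrightarrow> ceq (left_act x (left_act (letter_inv x) w)) w"
proof (cases "can_lead x w")
  case True
  assume r: "reduced w"
  from True obtain w' where w: "ceq w (x # w')" unfolding can_lead_def by blast
  then have "ceq (left_act (letter_inv x) w) w'" using left_act_cancel[of w "letter_inv x"] by simp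
  then have "ceq (left_act x (left_act (letter_inv x) w)) (left_act x w')" by (rule left_act_ceq)
  moreover have "\<not> can_lead (letter_inv x) w'" using reduced_ceq[OF w r] reduced_Cons_iff by blast
  then have "left_act x w' = x # w'" by (rule left_act_prepend)
  ultimately show ?thesis using w by (metis ceq_sym ceq_trans)
next
  case False
  then have "left_act (letter_inv x) w = letter_inv x # w" using left_act_prepend[of "letter_inv x"] by simp
  then show ?thesis using left_act_cancel[of "letter_inv x # w" x w] by simp
qed

lemma left_act_Cons_commuting:
  assumes xy: "\<not> E (fst x) (fst y)" "fst x \<noteq> fst y"
  shows "ceq (left_act x (y # w)) (y # left_act x w)"
proof (cases "can_lead (letter_inv x) w")
  case True
  then obtain w' where w: "ceq w (letter_inv x # w')" unfolding can_lead_def by blast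
  have "ceq (y # w) (y # letter_inv x # w')" using w by (rule ceq_Cons)
  also have "ceq \<dots> (letter_inv x # y # w')" using ceq_swap[of y "letter_inv x"] not_E_sym[OF xy(1)] by simp
  finally have "ceq (left_act x (y # w)) (y # w')" by (rule left_act_cancel)
  moreover have "ceq (y # left_act x w) (y # w')" using left_act_cancel[OF w] by (rule ceq_Cons)
  ultimately show ?thesis by (meson ceq_sym ceq_trans)
next
  case False
  moreover have "letter_inv x \<noteq> y" using xy by auto
  ultimately have "\<not> can_lead (letter_inv x) (y # w)" using can_lead_Cons_distinct by blast
  with False xy show ?thesis by (simp add: left_act_prepend ceq_swap)
qed

lemma left_act_not_can_lead:
  assumes xy: "\<not> E (fst x) (fst y)" "fst x \<noteq> fst y" and nl: "\<not> can_lead (letter_inv y) w"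
  shows "\<not> can_lead (letter_inv y) (left_act x w)"
proof (cases "can_lead (letter_inv x) w")
  case True
  then obtain w' where w: "ceq w (letter_inv x # w')" unfolding can_lead_def by blast
  show ?thesis
  proof
    assume "can_lead (letter_inv y) (left_act x w)"
    then have "can_lead (letter_inv y) w'" using can_lead_ceq[OF left_act_cancel[OF w]] by blast
    moreover have "\<not> E (fst (letter_inv y)) (fst (letter_inv x))" using not_E_sym[OF xy(1)] by simp
    ultimately have "can_lead (letter_inv y) (letter_inv x # w')" using can_lead_Cons_commuting by blast
    with w nl show False using can_lead_ceq ceq_sym by blast
  qed
next
  case False
  have "letter_inv y \<noteq> x" using xy by auto
  then show ?thesis
    using nl can_lead_Cons_distinct[of "letter_inv y" x w] unfolding left_act_prepend[OF False] by blast
qed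

lemma left_act_commute:
  assumes r: "reduced w" and xy: "\<not> E (fst x) (fst y)"
  shows "ceq (left_act x (left_act y w)) (left_act y (left_act x w))"
proof (cases "fst x = fst y")
  case True
  show ?thesis
  proof (cases "y = x")
    case False
    have y: "y = letter_inv x" using letter_inv_eqI[OF True[symmetric] False] .
    have "ceq (left_act (letter_inv x) (left_act x w)) w"
      using left_act_letter_inv[OF r, of "letter_inv x"] by simp
    with left_act_letter_inv[OF r, of x] y show ?thesis by (meson ceq_sym ceq_trans)
  qed simp
next
  case neq: False
  show ?thesis
  proof (cases "can_lead (letter_inv y) w")
    case True
    then obtain w' where w: "ceq w (letter_inv y # w')" unfolding can_lead_def by blast
    have "ceq (left_act x w) (left_act x (letter_inv y # w'))" using w by (rule left_act_ceq)
    also have "ceq \<dots> (letter_inv y # left_act x w')"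
      using left_act_Cons_commuting[of x "letter_inv y" w'] xy neq by simp
    finally have "ceq (left_act y (left_act x w)) (left_act x w')" by (rule left_act_cancel)
    moreover have "ceq (left_act x (left_act y w)) (left_act x w')"
      using left_act_cancel[OF w] by (rule left_act_ceq)
    ultimately show ?thesis by (meson ceq_sym ceq_trans)
  next
    case False
    then have "left_act y w = y # w" by (rule left_act_prepend)
    moreover have "\<not> can_lead (letter_inv y) (left_act x w)"
      using xy neq False by (rule left_act_not_can_lead)
    then have "left_act y (left_act x w) = y # left_act x w" by (rule left_act_prepend)
    moreover have "ceq (left_act x (y # w)) (y # left_act x w)"
      using xy neq by (rule left_act_Cons_commuting)
    ultimately show ?thesis by simp
  qed
qed

definition reduce_word :: "'v letter list \<Rightarrow> 'v letter list" where
  "reduce_word u = foldr left_act u []"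

lemma foldr_left_act_ceq: "ceq w1 w2 \<Longrightarrow> ceq (foldr left_act p w1) (foldr left_act p w2)"
  by (induction p) (auto simp: left_act_ceq)

lemma foldr_left_act_reduced: "reduced (foldr left_act p [])"
  by (induction p) (auto simp: left_act_reduced reduced_Nil)

lemma rstep_reduce_word: "rstep E u u' \<Longrightarrow> ceq (reduce_word u) (reduce_word u')"
proof (induction rule: rstep.induct)
  case (cancel xs v b ys)
  have "(v, \<not> b) = letter_inv (v, b)" unfolding letter_inv_def by simp
  then have "ceq (left_act (v, b) (left_act (v, \<not> b) (foldr left_act ys []))) (foldr left_act ys [])"
    using left_act_letter_inv[OF foldr_left_act_reduced, of "(v, b)" ys] by simp
  then show ?case unfolding reduce_word_def by (simp add: foldr_left_act_ceq)
next
  case (comm a c xs ys)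
  show ?case
    unfolding reduce_word_def using left_act_commute[OF foldr_left_act_reduced comm]
    by (simp add: foldr_left_act_ceq)
qed

lemma weq_reduce_word: "weq E u u' \<Longrightarrow> ceq (reduce_word u) (reduce_word u')"
  unfolding weq_def
proof (induction rule: equivclp_induct)
  case (step y z)
  then have "ceq (reduce_word y) (reduce_word z)" using rstep_reduce_word ceq_sym by blast
  with step.IH show ?case by (rule ceq_trans)
qed simp

lemma reduce_word_ceq_self: "reduced u \<Longrightarrow> ceq (reduce_word u) u"
proof (induction u)
  case (Cons x u)
  then have "reduced u" "\<not> can_lead (letter_inv x) u" by (simp_all add: reduced_Cons_iff)
  with Cons.IH have "ceq (reduce_word (x # u)) (left_act x u)"
    by (simp add: reduce_word_def left_act_ceq)
  with \<open>\<not> can_lead (letter_inv x) u\<close> show ?case by (simp add: left_act_prepend)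
qed (simp add: reduce_word_def)

theorem reduced_weq_imp_ceq: "reduced u \<Longrightarrow> reduced u' \<Longrightarrow> weq E u u' \<Longrightarrow> ceq u u'"
  using ceq_trans[OF ceq_trans[OF ceq_sym[OF reduce_word_ceq_self] weq_reduce_word] reduce_word_ceq_self]
  by blast

section \<open>Elements represented by reduced words\<close>

lemma rstep_inv_word: "rstep E u w \<Longrightarrow> rstep E (inv_word u) (inv_word w)"
proof (induction rule: rstep.induct)
  case (cancel xs v b ys)
  show ?case using rstep.cancel[of E "inv_word ys" v b "inv_word xs"] by (simp add: inv_word_def)
next
  case (comm a c xs ys)
  have "\<not> E (fst (letter_inv c)) (fst (letter_inv a))" using not_E_sym[OF comm] by simp
  from rstep.comm[of E "letter_inv c" "letter_inv a" "inv_word ys" "inv_word xs", OF this] show ?case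
    by (simp add: inv_word_append inv_word_Cons)
qed

lemma weq_inv_word: "weq E u w \<Longrightarrow> weq E (inv_word u) (inv_word w)"
  unfolding weq_def
proof (induction rule: equivclp_induct)
  case (step y z)
  then show ?case using rstep_inv_word by (meson equivclp_into_equivclp)
qed simp

lemma ginv_cls: "ginv E (cls E a) = cls E (inv_word a)"
  unfolding ginv_def cls_def by (blast intro: weq_trans weq_inv_word weq_refl)

lemma conj_cls: "gmul E (gmul E (cls E u) (cls E w)) (ginv E (cls E u)) = cls E (u @ w @ inv_word u)"
  by (simp add: gmul_cls ginv_cls)

lemma ceq_weq: "ceq u w \<Longrightarrow> weq E u w"
proof (induction rule: rtranclp_induct)
  case (step y z)
  then have "rstep E y z" unfolding commute_step_def using rstep.comm by blast
  with step.IH show ?case unfolding weq_def by (meson equivclp_into_equivclp r_into_equivclp)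
qed simp

lemma not_reduced_shorter: "\<not> reduced w \<Longrightarrow> \<exists>u. weq E w u \<and> length u < length w"
proof -
  assume "\<not> reduced w"
  then obtain a y b where w: "ceq w (a @ [y, letter_inv y] @ b)" unfolding reduced_def by blast
  have "rstep E (a @ [(fst y, snd y), (fst y, \<not> snd y)] @ b) (a @ b)" by (rule rstep.cancel)
  then have "weq E (a @ [y, letter_inv y] @ b) (a @ b)"
    unfolding weq_def letter_inv_def by (simp add: r_into_equivclp)
  then have "weq E w (a @ b)" using ceq_weq[OF w] weq_trans by blast
  moreover have "length (a @ b) < length w" using ceq_length[OF w] by simp
  ultimately show ?thesis by blast
qed

lemma shortest_word_reduced: "u \<in> cls E w \<Longrightarrow> length u = glen (cls E w) \<Longrightarrow> reduced u"
proof (rule ccontr)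
  assume u: "u \<in> cls E w" "length u = glen (cls E w)" "\<not> reduced u"
  then obtain u' where "weq E u u'" "length u' < length u" using not_reduced_shorter by blast
  moreover from this u(1) have "u' \<in> cls E w" using in_cls weq_trans by blast
  ultimately show False using u(2) glen_le[of u' "cls E w"] by simp
qed

lemma reduced_ceq_shortest:
  assumes "reduced w"
  obtains u where "u \<in> cls E w" "length u = glen (cls E w)" "ceq w u"
proof -
  have "w \<in> cls E w" by (simp add: in_cls)
  then obtain u where u: "u \<in> cls E w" "length u = glen (cls E w)" using glen_attained by blast
  with assms have "ceq w u" using reduced_weq_imp_ceq shortest_word_reduced in_cls by blast
  with u that show ?thesis by blast
qed

lemma glen_reduced: "reduced w \<Longrightarrow> glen (cls E w) = length w"
  by (metis reduced_ceq_shortest ceq_length)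

lemma supp_reduced: "reduced w \<Longrightarrow> supp (cls E w) = fst ` set w"
proof -
  assume r: "reduced w"
  have "set u = set w" if "u \<in> cls E w" "length u = glen (cls E w)" for u
    using reduced_weq_imp_ceq[OF r shortest_word_reduced[OF that]] that(1) ceq_set
    by (simp add: in_cls)
  moreover have "w \<in> cls E w" "length w = glen (cls E w)" using glen_reduced[OF r] by (auto simp: in_cls)
  ultimately show ?thesis unfolding supp_def by blast
qed

lemma raag_reduced_word:
  assumes "g \<in> raag E"
  obtains w where "g = cls E w" "reduced w"
proof -
  from assms obtain w0 where g: "g = cls E w0" unfolding raag_def by blast
  then have "w0 \<in> g" by (simp add: in_cls)
  then obtain u where u: "u \<in> g" "length u = glen g" using glen_attained by blast
  with g have "reduced u" using shortest_word_reduced by blast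
  moreover have "g = cls E u" using u(1) g cls_eqI by blast
  ultimately show ?thesis using that by blast
qed

definition lead_vertices :: "'v letter list \<Rightarrow> 'v set" where
  "lead_vertices w = {fst x | x. can_lead x w}"

lemma lead_verticesI: "ceq w (x # w') \<Longrightarrow> fst x \<in> lead_vertices w"
  unfolding lead_vertices_def can_lead_def by blast

lemma lead_verticesE:
  assumes "u \<in> lead_vertices w"
  obtains x w' where "u = fst x" "ceq w (x # w')"
  using assms unfolding lead_vertices_def can_lead_def by blast

lemma Sset_reduced: "reduced w \<Longrightarrow> Sset E (cls E w) = lead_vertices w"
proof (rule set_eqI, rule iffI)
  fix v assume r: "reduced w" and "v \<in> Sset E (cls E w)"
  then obtain b h where h: "h \<in> raag E" "cls E w = gmul E (gen E v b) h" "glen (cls E w) = 1 + glen h"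
    unfolding Sset_def by blast
  obtain u where u: "h = cls E u" "reduced u" using raag_reduced_word[OF h(1)] by blast
  have "cls E w = cls E ((v, b) # u)" using h(2) u by (simp add: gen_def gmul_cls)
  then have vu: "(v, b) # u \<in> cls E w" by (simp add: in_cls)
  moreover have "length ((v, b) # u) = glen (cls E w)" using h(3) u glen_reduced by simp
  ultimately have "reduced ((v, b) # u)" by (rule shortest_word_reduced)
  with r vu have "ceq w ((v, b) # u)" using reduced_weq_imp_ceq in_cls by blast
  then show "v \<in> lead_vertices w" using lead_verticesI by fastforce
next
  fix v assume r: "reduced w" and "v \<in> lead_vertices w"
  from \<open>v \<in> lead_vertices w\<close> obtain x w' where x: "v = fst x" "ceq w (x # w')"
    by (rule lead_verticesE)
  have rw': "reduced w'" using reduced_ceq[OF x(2) r] by (simp add: reduced_Cons_iff)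
  have "cls E w = cls E (x # w')" using cls_eq ceq_weq x(2) by blast
  also have "\<dots> = gmul E (gen E v (snd x)) (cls E w')"
    using x(1) by (cases x) (simp add: gen_def gmul_cls)
  finally have "cls E w = gmul E (gen E v (snd x)) (cls E w')" .
  moreover have "glen (cls E w) = 1 + glen (cls E w')"
    using glen_reduced[OF r] glen_reduced[OF rw'] ceq_length[OF x(2)] by simp
  ultimately show "v \<in> Sset E (cls E w)" unfolding Sset_def using cls_in_raag by blast
qed

section \<open>The conical decomposition\<close>

definition blocks :: "'v letter list \<Rightarrow> 'v letter \<Rightarrow> bool" where
  "blocks c y \<longleftrightarrow> (\<exists>q\<in>set c. E (fst q) (fst y) \<or> fst q = fst y)"

text \<open>A reduced cone at v represents a v-conical element (cone_lead_vertices).\<close>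

inductive cone :: "'v \<Rightarrow> 'v letter list \<Rightarrow> bool" for v where
  single: "cone v [(v, b)]"
| snoc: "cone v c \<Longrightarrow> blocks c y \<Longrightarrow> cone v (c @ [y])"

lemma cone_hd: "cone v c \<Longrightarrow> \<exists>b c'. c = (v, b) # c'"
  by (induction rule: cone.induct) auto

lemma cone_apex_in: "cone v c \<Longrightarrow> v \<in> fst ` set c"
  using cone_hd by fastforce

lemma blocks_reduced_snoc:
  assumes r: "reduced (c @ [y])" and b: "blocks c y"
  shows "\<exists>z\<in>set c. E (fst z) (fst y) \<or> z = y"
proof (rule ccontr)
  assume "\<not> ?thesis"
  then have nc: "\<forall>z\<in>set c. \<not> E (fst z) (fst y) \<and> z \<noteq> y" by blast
  with b obtain q where q: "q \<in> set c" "fst q = fst y" unfolding blocks_def by blast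
  with nc have qy: "q = letter_inv y" using letter_inv_eqI by blast
  obtain p s where c: "c = p @ q # s" using split_list[OF q(1)] by blast
  with nc have "ceq (s @ [y]) (y # s)" using ceq_move_front[of s y "[]"] by simp
  then have "ceq (c @ [y]) (p @ [letter_inv y, letter_inv (letter_inv y)] @ s)"
    using ceq_ctx[of "s @ [y]" "y # s" "p @ [q]" "[]"] c qy by simp
  with r show False unfolding reduced_def by blast
qed

lemma cone_lead_vertices: "cone v c \<Longrightarrow> reduced c \<Longrightarrow> lead_vertices c = {v}"
proof (induction rule: cone.induct)
  case (single b)
  show ?case
  proof (intro equalityI subsetI)
    fix u assume "u \<in> lead_vertices [(v, b)]"
    then obtain x w' where "u = fst x" "ceq [(v, b)] (x # w')" by (rule lead_verticesE)
    moreover from this(2) have "x \<in> set [(v, b)]" using ceq_set[of "[(v, b)]" "x # w'"] by simp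
    ultimately show "u \<in> {v}" by simp
  qed (use lead_verticesI[of "[(v, b)]" "(v, b)" "[]"] in simp)
next
  case (snoc c y)
  then have IH: "lead_vertices c = {v}" using reduced_appendD(1) by blast
  show ?case
  proof (intro equalityI subsetI)
    fix u assume "u \<in> lead_vertices (c @ [y])"
    then obtain x w' where u: "u = fst x" and xw: "ceq (c @ [y]) (x # w')" by (rule lead_verticesE)
    from ceq_Cons_decomp[OF ceq_sym[OF xw]] obtain c1 c2 where
      d: "c @ [y] = c1 @ x # c2" and c1: "\<forall>z\<in>set c1. \<not> E (fst z) (fst x) \<and> z \<noteq> x" by blast
    show "u \<in> {v}"
    proof (cases c2 rule: rev_cases)
      case Nil
      with d have "c1 = c" "x = y" by simp_all
      with c1 blocks_reduced_snoc[OF snoc.prems snoc.hyps(2)] show ?thesis by blast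
    next
      case (snoc c2' y')
      with d c1 have "ceq c (x # c1 @ c2')" using ceq_move_front by simp
      with IH u show ?thesis using lead_verticesI by blast
    qed
  next
    fix u assume "u \<in> {v}"
    moreover obtain b c' where "c = (v, b) # c'" using cone_hd[OF snoc.hyps(1)] by blast
    ultimately show "u \<in> lead_vertices (c @ [y])" using lead_verticesI[of "c @ [y]" "(v, b)" "c' @ [y]"] by simp
  qed
qed

lemma conical_split_exists:
  "v \<in> fst ` set w \<Longrightarrow> \<exists>a c. ceq w (a @ c) \<and> v \<notin> fst ` set a \<and> cone v c"
proof (induction w rule: rev_induct)
  case (snoc y w)
  show ?case
  proof (cases "v \<in> fst ` set w")
    case True
    with snoc.IH obtain a c where ac: "ceq w (a @ c)" "v \<notin> fst ` set a" "cone v c" by blast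
    have w1: "ceq (w @ [y]) (a @ c @ [y])" using ceq_ctx[OF ac(1), of "[]" "[y]"] by simp
    show ?thesis
    proof (cases "blocks c y")
      case True
      with w1 ac show ?thesis using cone.snoc[OF ac(3) True] by blast
    next
      case False
      then have nb: "\<forall>z\<in>set c. \<not> E (fst z) (fst y)" "fst y \<noteq> v"
        using cone_apex_in[OF ac(3)] unfolding blocks_def by auto
      have "ceq (c @ [y]) (y # c)" using ceq_move_front[OF nb(1), of "[]"] by simp
      then have "ceq (a @ c @ [y]) ((a @ [y]) @ c)" using ceq_ctx[of "c @ [y]" "y # c" a "[]"] by simp
      with w1 have "ceq (w @ [y]) ((a @ [y]) @ c)" by (rule ceq_trans)
      with ac nb(2) show ?thesis by (intro exI[of _ "a @ [y]"] exI[of _ c]) auto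
    qed
  next
    case False
    with snoc.prems have "fst y = v" by auto
    then have "cone v [y]" using cone.single[of v "snd y"] by (cases y) auto
    with False show ?thesis by (intro exI[of _ w] exI[of _ "[y]"]) auto
  qed
qed simp

text \<open>Pushing the letters of a through a cone: a blocked letter joins the cone, any other one
  passes to the front.\<close>

lemma cone_absorb:
  "cone v c \<Longrightarrow> \<exists>a' c'. ceq (c @ a) (a' @ c') \<and> set a' \<subseteq> set a \<and> cone v c' \<and> length a' \<le> length a
     \<and> (length a' = length a \<longrightarrow> c' = c \<and> (\<forall>y\<in>set a. \<not> blocks c y))"
proof (induction a rule: rev_induct)
  case Nil
  then show ?case by (intro exI[of _ "[]"] exI[of _ c]) auto
next
  case (snoc y a)
  then obtain a' c' where ac: "ceq (c @ a) (a' @ c')" "set a' \<subseteq> set a" "cone v c'"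
    "length a' \<le> length a" "length a' = length a \<longrightarrow> c' = c \<and> (\<forall>y\<in>set a. \<not> blocks c y)" by blast
  have w1: "ceq (c @ a @ [y]) (a' @ c' @ [y])" using ceq_ctx[OF ac(1), of "[]" "[y]"] by simp
  show ?case
  proof (cases "blocks c' y")
    case True
    with w1 ac show ?thesis using cone.snoc[OF ac(3) True]
      by (intro exI[of _ a'] exI[of _ "c' @ [y]"]) auto
  next
    case False
    then have "\<forall>z\<in>set c'. \<not> E (fst z) (fst y)" unfolding blocks_def by auto
    then have "ceq (c' @ [y]) (y # c')" using ceq_move_front[of c' y "[]"] by simp
    then have "ceq (a' @ c' @ [y]) ((a' @ [y]) @ c')" using ceq_ctx[of "c' @ [y]" "y # c'" a' "[]"] by simp
    with w1 have "ceq (c @ a @ [y]) ((a' @ [y]) @ c')" by (rule ceq_trans)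
    with ac False show ?thesis by (intro exI[of _ "a' @ [y]"] exI[of _ c']) auto
  qed
qed

lemma cone_absorb_shrinks:
  assumes c: "cone v c" and a: "a \<noteq> []" and conn: "connected_in E (fst ` set (a @ c))"
  shows "\<exists>a' c'. ceq (c @ a) (a' @ c') \<and> set a' \<subseteq> set a \<and> cone v c' \<and> length a' < length a"
proof -
  obtain a' c' where ac: "ceq (c @ a) (a' @ c')" "set a' \<subseteq> set a" "cone v c'" "length a' \<le> length a"
    and eq: "length a' = length a \<longrightarrow> c' = c \<and> (\<forall>y\<in>set a. \<not> blocks c y)"
    using cone_absorb[OF c] by blast
  have "length a' \<noteq> length a"
  proof
    assume "length a' = length a"
    with eq have "\<forall>y\<in>set a. \<not> blocks c y" by simp
    then have "\<forall>x\<in>fst ` set a. \<forall>y\<in>fst ` set c. \<not> E x y \<and> x \<noteq> y"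
      unfolding blocks_def by (metis E_sym imageE)
    moreover obtain a0 where "a0 \<in> set a" using a by (cases a) auto
    ultimately show False
      using connected_in_not_separated[of E "fst ` set a" "fst ` set c"] conn cone_apex_in[OF c]
      by (simp add: image_Un) blast
  qed
  with ac show ?thesis by (intro exI[of _ a'] exI[of _ c']) auto
qed

lemma conical_split_unique:
  assumes "ceq (a @ c) (a' @ c')" and "v \<notin> fst ` set a" "v \<notin> fst ` set a'"
    and "lead_vertices c = {v}" "lead_vertices c' = {v}"
  shows "ceq a a'" "ceq c c'"
proof -
  from ceq_append_levi[OF assms(1)] obtain x y z s where
    l: "ceq a (x @ y)" "ceq c (z @ s)" "ceq a' (x @ z)" "ceq c' (y @ s)" by blast
  have "z = []"
  proof (rule ccontr)
    assume "z \<noteq> []"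
    then obtain z0 zs where z: "z = z0 # zs" by (cases z) auto
    with l(2) have "ceq c (z0 # zs @ s)" by simp
    then have "fst z0 = v" using lead_verticesI assms(4) by blast
    moreover have "z0 \<in> set a'" using ceq_set[OF l(3)] z by auto
    ultimately show False using assms(3) by blast
  qed
  have "y = []"
  proof (rule ccontr)
    assume "y \<noteq> []"
    then obtain y0 ys where y: "y = y0 # ys" by (cases y) auto
    with l(4) have "ceq c' (y0 # ys @ s)" by simp
    then have "fst y0 = v" using lead_verticesI assms(5) by blast
    moreover have "y0 \<in> set a" using ceq_set[OF l(1)] y by auto
    ultimately show False using assms(2) by blast
  qed
  with \<open>z = []\<close> l have "ceq a x" "ceq a' x" "ceq c s" "ceq c' s" by simp_all
  then show "ceq a a'" "ceq c c'" using ceq_trans[OF _ ceq_sym] by blast+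
qed

lemma geodesic_conical_factors:
  assumes r: "reduced w" and t: "t \<in> raag E" and p: "p \<in> raag E"
    and w: "cls E w = gmul E t p" "glen (cls E w) = glen t + glen p"
    and cp: "conical E v p" and vt: "v \<notin> supp t"
  obtains a c where "t = cls E a" "p = cls E c" "ceq w (a @ c)" "v \<notin> fst ` set a"
    "lead_vertices c = {v}"
proof -
  obtain a where a: "t = cls E a" "reduced a" using raag_reduced_word[OF t] by blast
  obtain c where c: "p = cls E c" "reduced c" using raag_reduced_word[OF p] by blast
  have "a @ c \<in> cls E w" using w(1) a c by (simp add: gmul_cls in_cls)
  moreover have "length (a @ c) = glen (cls E w)" using w(2) a c glen_reduced by simp
  ultimately have "ceq w (a @ c)" using r reduced_weq_imp_ceq shortest_word_reduced in_cls by blast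
  moreover have "lead_vertices c = {v}" using cp c Sset_reduced unfolding conical_def by auto
  moreover have "v \<notin> fst ` set a" using vt a supp_reduced by auto
  ultimately show ?thesis using that a c by blast
qed

lemma conical_dec_cls:
  assumes r: "reduced w" and wac: "ceq w (a @ c)" and va: "v \<notin> fst ` set a" and cc: "cone v c"
  shows "conical_dec E v (cls E w) = (cls E a, cls E c)"
proof -
  have rac: "reduced (a @ c)" using reduced_ceq[OF wac r] .
  note ra = reduced_appendD(1)[OF rac] and rc = reduced_appendD(2)[OF rac]
  have Fc: "lead_vertices c = {v}" using cone_lead_vertices[OF cc rc] .
  let ?P = "\<lambda>(t, p). t \<in> raag E \<and> p \<in> raag E \<and> cls E w = gmul E t p \<and>
      glen (cls E w) = glen t + glen p \<and> conical E v p \<and> v \<notin> supp t"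
  have "cls E w = cls E (a @ c)" using cls_eq ceq_weq wac by blast
  then have "?P (cls E a, cls E c)"
    using glen_reduced[OF r] glen_reduced[OF ra] glen_reduced[OF rc] ceq_length[OF wac]
      Sset_reduced[OF rc] Fc supp_reduced[OF ra] va
    by (simp add: gmul_cls conical_def)
  moreover have "tp = (cls E a, cls E c)" if "?P tp" for tp
  proof (cases tp)
    case (Pair t p)
    from that Pair obtain a' c' where a'c': "t = cls E a'" "p = cls E c'" "ceq w (a' @ c')"
      "v \<notin> fst ` set a'" "lead_vertices c' = {v}"
      using geodesic_conical_factors[OF r] by blast
    with wac have "ceq (a @ c) (a' @ c')" by (meson ceq_sym ceq_trans)
    with a'c' have "ceq a a'" "ceq c c'" using conical_split_unique va Fc by blast+
    with a'c' Pair show ?thesis using cls_eq ceq_weq by metis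
  qed
  ultimately show ?thesis unfolding conical_dec_def by (rule the_equality)
qed

lemma conical_step_cls:
  assumes "reduced w" "ceq w (a @ c)" "v \<notin> fst ` set a" "cone v c"
  shows "conical_step E v (cls E w) = cls E (c @ a)"
  unfolding conical_step_def using conical_dec_cls[OF assms] by (simp add: gmul_cls)

lemma cls_rotate_conj:
  assumes "ceq w (a @ c)"
  shows "cls E (u @ (c @ a) @ inv_word u) =
    gmul E (gmul E (cls E (u @ inv_word a)) (cls E w)) (ginv E (cls E (u @ inv_word a)))"
proof -
  have "weq E (inv_word a @ w @ a) (inv_word a @ (a @ c) @ a)"
    using weq_ctx[OF ceq_weq[OF assms]] .
  moreover have "weq E (inv_word a @ (a @ c) @ a) (c @ a)"
    using weq_ctx[OF weq_inv_word_cancel[of E a], of "[]" "c @ a"] by simp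
  ultimately have "weq E (inv_word a @ w @ a) (c @ a)" by (rule weq_trans)
  then have "weq E (u @ (inv_word a @ w @ a) @ inv_word u) (u @ (c @ a) @ inv_word u)" by (rule weq_ctx)
  from cls_eq[OF this] show ?thesis by (simp add: conj_cls inv_word_append)
qed

lemma cyc_reduced_rotate:
  assumes r: "reduced w" and cr: "cyc_reduced E (cls E w)" and wac: "ceq w (a @ c)"
  shows "reduced (c @ a)" "cyc_reduced E (cls E (c @ a))"
proof -
  have conj: "length w \<le> glen (cls E (u @ (c @ a) @ inv_word u))" for u
    using cr[unfolded cyc_reduced_def, rule_format, OF cls_in_raag[of E "u @ inv_word a"]]
      cls_rotate_conj[OF wac, of u] glen_reduced[OF r] by simp
  have "length w \<le> glen (cls E (c @ a))" using conj[of "[]"] by (simp add: inv_word_def)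
  moreover have "glen (cls E (c @ a)) \<le> length (c @ a)" by (rule glen_le) (simp add: in_cls)
  moreover have l: "length (c @ a) = length w" using ceq_length[OF wac] by simp
  ultimately have gl: "glen (cls E (c @ a)) = length (c @ a)" by simp
  then show "reduced (c @ a)" using shortest_word_reduced[of "c @ a" "c @ a"] by (simp add: in_cls)
  show "cyc_reduced E (cls E (c @ a))"
    unfolding cyc_reduced_def raag_def using conj gl l by (auto simp: conj_cls)
qed

section \<open>The conical conjugate\<close>

lemma raag_conical_split:
  assumes "g \<in> raag E" "v \<in> supp g"
  obtains w a c where "g = cls E w" "reduced w" "ceq w (a @ c)" "v \<notin> fst ` set a" "cone v c"
proof -
  obtain w where w: "g = cls E w" "reduced w" using raag_reduced_word[OF assms(1)] by blast
  with assms(2) have "v \<in> fst ` set w" using supp_reduced by simp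
  then obtain a c where "ceq w (a @ c)" "v \<notin> fst ` set a" "cone v c"
    using conical_split_exists by blast
  with w that show ?thesis by blast
qed

lemma conical_step_invariant:
  assumes g: "g \<in> raag E" "cyc_reduced E g" and v: "v \<in> supp g"
  shows "conical_step E v g \<in> raag E \<and> cyc_reduced E (conical_step E v g) \<and>
    supp (conical_step E v g) = supp g"
proof -
  obtain w a c where w: "g = cls E w" "reduced w" "ceq w (a @ c)" "v \<notin> fst ` set a" "cone v c"
    using raag_conical_split[OF g(1) v] .
  have "conical_step E v g = cls E (c @ a)" using conical_step_cls[OF w(2-5)] w(1) by simp
  moreover have "reduced (c @ a)" "cyc_reduced E (cls E (c @ a))"
    using cyc_reduced_rotate[OF w(2) _ w(3)] g(2) w(1) by simp_all
  moreover have "fst ` set (c @ a) = supp g" using supp_reduced[OF w(2)] ceq_set[OF w(3)] w(1) by auto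
  ultimately show ?thesis using supp_reduced by simp
qed

lemma conical_step_funpow_invariant:
  assumes "g \<in> raag E" "cyc_reduced E g" "v \<in> supp g"
  shows "(conical_step E v ^^ k) g \<in> raag E \<and> cyc_reduced E ((conical_step E v ^^ k) g) \<and>
    supp ((conical_step E v ^^ k) g) = supp g"
proof (induction k)
  case (Suc k)
  then show ?case using conical_step_invariant[of "(conical_step E v ^^ k) g" v] assms(3) by simp
qed (use assms in simp)

text \<open>The termination measure: the length of t in the decomposition g = t p.\<close>

lemma conical_step_prefix_shrinks:
  assumes g: "g \<in> raag E" "cyc_reduced E g" "non_split E g"
    and v: "v \<in> supp g" and nc: "\<not> conical E v g"
  shows "glen (fst (conical_dec E v (conical_step E v g))) < glen (fst (conical_dec E v g))"
proof -
  obtain w a c where w: "g = cls E w" "reduced w" "ceq w (a @ c)" "v \<notin> fst ` set a" "cone v c"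
    using raag_conical_split[OF g(1) v] .
  have rac: "reduced (a @ c)" using reduced_ceq[OF w(3,2)] .
  have "a \<noteq> []"
  proof
    assume "a = []"
    with w(1) cls_eq[OF ceq_weq[OF w(3)]] have "g = cls E c" by simp
    with nc show False
      using Sset_reduced cone_lead_vertices[OF w(5)] rac \<open>a = []\<close> unfolding conical_def by simp
  qed
  moreover have "connected_in E (fst ` set (a @ c))"
    using g(3) supp_reduced[OF w(2)] ceq_set[OF w(3)] w(1) unfolding non_split_def by simp
  ultimately obtain a' c' where ac': "ceq (c @ a) (a' @ c')" "set a' \<subseteq> set a" "cone v c'"
    "length a' < length a" using cone_absorb_shrinks[OF w(5)] by blast
  have rca: "reduced (c @ a)" using cyc_reduced_rotate(1)[OF w(2) _ w(3)] g(2) w(1) by simp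
  have "v \<notin> fst ` set a'" using w(4) ac'(2) by blast
  then have "conical_dec E v (conical_step E v g) = (cls E a', cls E c')"
    using conical_step_cls[OF w(2-5)] w(1) conical_dec_cls[OF rca ac'(1) _ ac'(3)] by simp
  moreover have "conical_dec E v g = (cls E a, cls E c)" using conical_dec_cls[OF w(2-5)] w(1) by simp
  moreover have "reduced a'" using reduced_appendD(1) reduced_ceq[OF ac'(1) rca] by blast
  moreover have "reduced a" using reduced_appendD(1)[OF rac] .
  ultimately show ?thesis using ac'(4) glen_reduced by simp
qed

lemma conical_step_eventually_conical:
  assumes "g \<in> raag E" "cyc_reduced E g" "non_split E g" "v \<in> supp g"
  shows "\<exists>k. conical E v ((conical_step E v ^^ k) g)"
  using assms
proof (induction "glen (fst (conical_dec E v g))" arbitrary: g rule: less_induct)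
  case less
  show ?case
  proof (cases "conical E v g")
    case False
    let ?g' = "conical_step E v g"
    have "?g' \<in> raag E" "cyc_reduced E ?g'" "non_split E ?g'" "v \<in> supp ?g'"
      using conical_step_invariant[OF less.prems(1,2,4)] less.prems(3,4)
      unfolding non_split_def by simp_all
    with less.hyps[OF conical_step_prefix_shrinks[OF less.prems False]]
    obtain k where "conical E v ((conical_step E v ^^ k) ?g')" by blast
    then have "conical E v ((conical_step E v ^^ Suc k) g)"
      by (simp add: funpow_Suc_right del: funpow.simps)
    then show ?thesis by blast
  qed (intro exI[of _ 0], simp)
qed

theorem conical_conj_conical:
  assumes "g \<in> raag E" "cyc_reduced E g" "non_split E g" "v \<in> supp g"
  shows "conical E v (conical_conj E v g)" "supp (conical_conj E v g) = supp g"
proof -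
  let ?K = "LEAST k. conical E v ((conical_step E v ^^ k) g)"
  have cc: "conical_conj E v g = (conical_step E v ^^ ?K) g" unfolding conical_conj_def ..
  show "conical E v (conical_conj E v g)"
    unfolding cc using conical_step_eventually_conical[OF assms] by (rule LeastI_ex)
  show "supp (conical_conj E v g) = supp g"
    unfolding cc using conical_step_funpow_invariant assms(1,2,4) by blast
qed

corollary conical_conj_strongly_non_split:
  assumes "g \<in> raag E" "cyc_reduced E g" "strongly_non_split E g" "v \<in> supp g"
  shows "conical E v (conical_conj E v g)" "strongly_non_split E (conical_conj E v g)"
  using conical_conj_conical[OF assms(1,2) _ assms(4)] assms(3) strongly_non_split_supp_cong
  unfolding strongly_non_split_def by blast+

end

lemma strongly_non_split_adjacent_supp:
  assumes "supp g1 \<noteq> {}" "strongly_non_split E g2"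
  shows "\<exists>v1\<in>supp g1. \<exists>v2\<in>supp g2. v1 = v2 \<or> E v1 v2"
proof -
  obtain v1 where v1: "v1 \<in> supp g1" using assms(1) by blast
  show ?thesis
  proof (cases "v1 \<in> supp g2")
    case False
    with assms(2) obtain v2 where "v2 \<in> supp g2" "E v1 v2"
      unfolding strongly_non_split_def disj_commutes_def by blast
    with v1 show ?thesis by blast
  qed (use v1 in blast)
qed

lemma linear_order_first_two:
  fixes v1 v2 :: "'a::countable"
  shows "\<exists>R. linear_order_on UNIV R \<and> (\<forall>v. (v, v1) \<in> R \<longrightarrow> v = v1) \<and>
    (\<forall>v. (v, v2) \<in> R \<longrightarrow> v = v1 \<or> v = v2)"
proof -
  define k where "k x = (if x = v1 then 0 else if x = v2 then 1 else to_nat x + 2)" for x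
  have k_inj: "k x = k y \<Longrightarrow> x = y" for x y
    unfolding k_def by (auto split: if_splits)
  define R where "R = {(x, y). k x \<le> k y}"
  have "linear_order_on UNIV R"
    unfolding linear_order_on_def partial_order_on_def preorder_on_def refl_on_def trans_def
      antisym_def total_on_def R_def
    using k_inj by (auto intro: le_antisym)
  moreover have "(v, v1) \<in> R \<Longrightarrow> v = v1" "(v, v2) \<in> R \<Longrightarrow> v = v1 \<or> v = v2" for v
    unfolding R_def k_def by (auto split: if_splits)
  ultimately show ?thesis by blast
qed

theorem lemma2p11:
  fixes E :: "'v::finite \<Rightarrow> 'v \<Rightarrow> bool" and g1 g2 :: "'v elt"
  assumes "symp E" and "irreflp E"
    and "g1 \<in> raag E" and "g2 \<in> raag E"
    and "strongly_non_split E g1" and "strongly_non_split E g2"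
    and "cyc_reduced E g1" and "cyc_reduced E g2"
  shows "\<exists>R. linear_order_on UNIV R \<and>
           (\<exists>v1\<in>supp g1. \<exists>v2\<in>supp g2.
              strongly_non_split E (conical_conj E v1 g1) \<and> SD_conical E R (conical_conj E v1 g1) \<and>
              strongly_non_split E (conical_conj E v2 g2) \<and> SD_conical E R (conical_conj E v2 g2))"
proof -
  interpret raag_graph E by unfold_locales (fact assms(1))
  have "supp g1 \<noteq> {}"
    using assms(5) by (simp add: strongly_non_split_def non_split_def connected_in_def)
  from strongly_non_split_adjacent_supp[OF this assms(6)] obtain v1 v2
    where v: "v1 \<in> supp g1" "v2 \<in> supp g2" "v1 = v2 \<or> E v1 v2" by blast
  obtain R where R: "linear_order_on UNIV R" "\<forall>v. (v, v1) \<in> R \<longrightarrow> v = v1"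
    "\<forall>v. (v, v2) \<in> R \<longrightarrow> v = v1 \<or> v = v2"
    using linear_order_first_two by blast
  note g1 = conical_conj_strongly_non_split[OF assms(3,7,5) v(1)]
  note g2 = conical_conj_strongly_non_split[OF assms(4,8,6) v(2)]
  have "SD_conical E R (conical_conj E v1 g1)" using g1(1) R(2) unfolding SD_conical_def by blast
  moreover have "SD_conical E R (conical_conj E v2 g2)"
    using g2(1) R(3) v(3) unfolding SD_conical_def by blast
  ultimately show ?thesis using R(1) v(1,2) g1(2) g2(2) by blast
qed

end
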